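(* Consider an instance of \textsc{Min-Lin-Eq$(q)$-Full} on the complete graph with $n$ vertices and $m=\binom n2$ edges. Fix an optimal assignment $\mathrm{OPT}$, violating $\mathrm{OPT_{val}}=\varepsilon m$ constraints with $0\le \varepsilon<\frac12$, and call the edges violated by $\mathrm{OPT}$ red. Call a vertex $v$ flippable if the number of red edges incident to $v$ is at least $(n-1)/2-\varepsilon(n-1)$. Then there are at most $\varepsilon\nu n$ flippable vertices, where $\nu=2/(1-2\varepsilon)$.
   Context: \textsc{Min-Lin-Eq$(q)$-Full}: given a complete simple graph $G=(V,E)$, a positive integer $q$, and for each ordered pair $(u,v)$ of distinct vertices an integer $c_{uv}\in\{0,\dots,q-1\}$ with $c_{vu}\equiv -c_{uv}\pmod q$, each edge $uv$ carries the constraint $x_u-x_v\equiv c_{uv}\pmod q$ on assignments $x:V\to\{0,\dots,q-1\}$; the goal is to find an assignment minimizing the number of violated constraints. *)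

theory Defs
  imports "HOL-Number_Theory.Cong" Complex_Main
begin

definition min_lin_eq_full_instance :: "'a set \<Rightarrow> int \<Rightarrow> ('a \<Rightarrow> 'a \<Rightarrow> int) \<Rightarrow> bool" where
  "min_lin_eq_full_instance V q c \<longleftrightarrow>
     finite V \<and> q > 0 \<and>
     (\<forall>u\<in>V. \<forall>v\<in>V. u \<noteq> v \<longrightarrow> c u v \<in> {0..<q} \<and> [c v u = - c u v] (mod q))"

definition is_assignment :: "'a set \<Rightarrow> int \<Rightarrow> ('a \<Rightarrow> int) \<Rightarrow> bool" where
  "is_assignment V q x \<longleftrightarrow> (\<forall>v\<in>V. x v \<in> {0..<q})"

definition violates :: "int \<Rightarrow> ('a \<Rightarrow> 'a \<Rightarrow> int) \<Rightarrow> ('a \<Rightarrow> int) \<Rightarrow> 'a \<Rightarrow> 'a \<Rightarrow> bool" where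
  "violates q c x u v \<longleftrightarrow> \<not> [x u - x v = c u v] (mod q)"

definition complete_edges :: "'a set \<Rightarrow> 'a set set" where
  "complete_edges V = {{u, v} | u v. u \<in> V \<and> v \<in> V \<and> u \<noteq> v}"

definition violated_edges :: "'a set \<Rightarrow> int \<Rightarrow> ('a \<Rightarrow> 'a \<Rightarrow> int) \<Rightarrow> ('a \<Rightarrow> int) \<Rightarrow> 'a set set" where
  "violated_edges V q c x =
     {{u, v} | u v. u \<in> V \<and> v \<in> V \<and> u \<noteq> v \<and> violates q c x u v}"

definition num_violated :: "'a set \<Rightarrow> int \<Rightarrow> ('a \<Rightarrow> 'a \<Rightarrow> int) \<Rightarrow> ('a \<Rightarrow> int) \<Rightarrow> nat" where
  "num_violated V q c x = card (violated_edges V q c x)"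

definition is_optimal :: "'a set \<Rightarrow> int \<Rightarrow> ('a \<Rightarrow> 'a \<Rightarrow> int) \<Rightarrow> ('a \<Rightarrow> int) \<Rightarrow> bool" where
  "is_optimal V q c x \<longleftrightarrow> is_assignment V q x \<and>
     (\<forall>y. is_assignment V q y \<longrightarrow> num_violated V q c x \<le> num_violated V q c y)"

definition red_degree :: "'a set \<Rightarrow> int \<Rightarrow> ('a \<Rightarrow> 'a \<Rightarrow> int) \<Rightarrow> ('a \<Rightarrow> int) \<Rightarrow> 'a \<Rightarrow> nat" where
  "red_degree V q c x v = card {e \<in> violated_edges V q c x. v \<in> e}"

definition flippable :: "'a set \<Rightarrow> int \<Rightarrow> ('a \<Rightarrow> 'a \<Rightarrow> int) \<Rightarrow> ('a \<Rightarrow> int) \<Rightarrow> real \<Rightarrow> 'a \<Rightarrow> bool" where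
  "flippable V q c x \<epsilon> v \<longleftrightarrow>
     real (red_degree V q c x v) \<ge> (real (card V) - 1) / 2 - \<epsilon> * (real (card V) - 1)"

end

theory Submission
  imports Defs
begin

(* Summing the red degrees counts every red edge twice, so they add up to eps n (n - 1).
   Every flippable vertex contributes at least (n - 1)(1 - 2 eps)/2 to that sum, which bounds
   the number of flippable vertices by 2 eps n / (1 - 2 eps). *)

lemma sum_card_incident_edges:
  assumes "finite V" and "E \<subseteq> Pow V" and "\<And>e. e \<in> E \<Longrightarrow> card e = 2"
  shows "(\<Sum>v\<in>V. card {e \<in> E. v \<in> e}) = 2 * card E"
proof (rule sum_multicount)
  show "finite E"
    using assms(1,2) by (meson finite_Pow_iff finite_subset)
  show "\<forall>e\<in>E. card {v \<in> V. v \<in> e} = 2"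
    using assms(2,3) by (metis (no_types, lifting) Collect_mem_eq Collect_cong PowD subsetD)
qed (fact assms(1))

lemma sum_red_degree:
  assumes "finite V"
  shows "(\<Sum>v\<in>V. red_degree V q c x v) = 2 * num_violated V q c x"
  unfolding red_degree_def num_violated_def
proof (rule sum_card_incident_edges[OF assms])
  show "violated_edges V q c x \<subseteq> Pow V"
    unfolding violated_edges_def by auto
  show "card e = 2" if "e \<in> violated_edges V q c x" for e
    using that unfolding violated_edges_def by auto
qed

lemma of_nat_choose_two:
  "(of_nat (n choose 2) :: 'a::field_char_0) = of_nat n * (of_nat n - 1) / 2"
  by (simp add: binomial_gbinomial gbinomial_prod_rev numeral_2_eq_2)

theorem lemma3:
  fixes V :: "'a set" and q :: int and c :: "'a \<Rightarrow> 'a \<Rightarrow> int"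
    and OPT :: "'a \<Rightarrow> int" and \<epsilon> :: real
  assumes inst: "min_lin_eq_full_instance V q c"
    and n2: "card V \<ge> 2"
    and opt: "is_optimal V q c OPT"
    and val: "real (num_violated V q c OPT) = \<epsilon> * real (card V choose 2)"
    and eps0: "0 \<le> \<epsilon>" and eps1: "\<epsilon> < 1/2"
  shows "real (card {v \<in> V. flippable V q c OPT \<epsilon> v})
           \<le> \<epsilon> * (2 / (1 - 2 * \<epsilon>)) * real (card V)"
proof -
  let ?n = "real (card V)"
  let ?F = "{v \<in> V. flippable V q c OPT \<epsilon> v}"
  let ?d = "\<lambda>v. real (red_degree V q c OPT v)"
  let ?t = "(?n - 1) * (1 - 2 * \<epsilon>) / 2"
  have fin: "finite V"
    using inst unfolding min_lin_eq_full_instance_def by simp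
  have total: "(\<Sum>v\<in>V. ?d v) = \<epsilon> * ?n * (?n - 1)"
    using val sum_red_degree[OF fin, of q c OPT, THEN arg_cong[of _ _ real]]
    by (simp add: of_nat_choose_two)
  have threshold: "?t = (?n - 1) / 2 - \<epsilon> * (?n - 1)"
    by (simp add: field_simps)
  have "real (card ?F) * ?t \<le> (\<Sum>v\<in>?F. ?d v)"
    by (rule sum_bounded_below) (simp add: flippable_def threshold)
  also have "\<dots> \<le> (\<Sum>v\<in>V. ?d v)"
    by (rule sum_mono2) (use fin in auto)
  finally have markov: "real (card ?F) * ?t \<le> \<epsilon> * ?n * (?n - 1)"
    unfolding total .
  have "(?n - 1) * (real (card ?F) * (1 - 2 * \<epsilon>)) = 2 * (real (card ?F) * ?t)"
    by (simp add: algebra_simps)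
  also have "\<dots> \<le> 2 * (\<epsilon> * ?n * (?n - 1))"
    using markov by linarith
  also have "\<dots> = (?n - 1) * (2 * \<epsilon> * ?n)"
    by (simp add: algebra_simps)
  finally have "real (card ?F) * (1 - 2 * \<epsilon>) \<le> 2 * \<epsilon> * ?n"
    using n2 by simp
  with eps1 show ?thesis
    by (simp add: field_simps)
qed

end
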